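(* Fix the data described in the context (integers $n,m,n_1,\dots,n_m,\alpha$, functions $\varphi_0,\dots,\varphi_m$ with $\varphi_m\equiv1$, the Hamiltonians $h^{(k)}_i$ on $\mathcal M$ and the vector fields $X^{(k)}_i=\pi_0\,dh^{(k)}_i$). Let $s\in\{1,\dots,\alpha\}$ and let $\mathfrak M:\mathcal M\to\mathcal M$ be the Miura map $$\bar\lambda_i=\lambda_i,\quad \bar\mu_i=\lambda_i^{-s}\mu_i\ (i=1,\dots,n),\quad \bar c^{(k)}_i=h^{(k)}_{n_k-i+1}(\boldsymbol\lambda,\boldsymbol\mu,\mathbf c)\ (i=1,\dots,s),\quad \bar c^{(k)}_i=c^{(k)}_i\ (i=s+1,\dots,\alpha),$$ for $k=1,\dots,m$, assumed to define new coordinates $(\bar{\boldsymbol\lambda},\bar{\boldsymbol\mu},\bar{\mathbf c})$ on $\mathcal M$. Let $\bar h^{(k)}_i(\bar{\boldsymbol\lambda},\bar{\boldsymbol\mu},\bar{\mathbf c})$, $i=1,\dots,n_k$, $k=1,\dots,m$, be the functions obtained by solving, for the unknowns $\bar h^{(k)}_i$, the $n$ separation relations ($j=1,\dots,n$) $$\varphi_0(\bar\lambda_j,\bar\lambda_j^s\bar\mu_j)\bar\lambda_j^{-s}+\sum_{k=1}^m\varphi_k(\bar\lambda_j,\bar\mu_j\bar\lambda_j^s)\,\bar\psi_k(\bar\lambda_j)=0,$$ $$\bar\psi_k(\bar\lambda)=\bar c^{(k)}_\alpha\bar\lambda^{n_k+\alpha-s-1}+\dots+\bar c^{(k)}_{s+1}\bar\lambda^{n_k}+\sum_{i=1}^{n_k}\bar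 h^{(k)}_i\bar\lambda^{n_k-i}+\bar c^{(k)}_s\bar\lambda^{-1}+\dots+\bar c^{(k)}_1\bar\lambda^{-s},$$ and let $\bar X^{(k)}_i=\bar\pi\,d\bar h^{(k)}_i$ with $\bar\pi=\sum_{i=1}^n\frac{\partial}{\partial\bar\lambda_i}\wedge\frac{\partial}{\partial\bar\mu_i}$ (in the coordinates $(\bar{\boldsymbol\lambda},\bar{\boldsymbol\mu},\bar{\mathbf c})$). Then, as vector fields on $\mathcal M$, $$X^{(k)}_i=\bar X^{(k)}_i,\qquad i=1,\dots,n_k,\ k=1,\dots,m.$$
   Context: Let $n,m\ge1$, $n_1,\dots,n_m\ge1$ integers with $n_1+\dots+n_m=n$, and $\alpha$ an integer with $1\le\alpha\le\min_k n_k$; set $N=\alpha m$. Let $\varphi_0,\varphi_1,\dots,\varphi_m$ be smooth functions of $(\lambda,\mu)$ with $\varphi_m\equiv1$. Consider the $(n+N)$-parameter algebraic curve $$\varphi_0(\lambda,\mu)+\sum_{k=1}^m\varphi_k(\lambda,\mu)\,\psi_k(\lambda)=0,\qquad \psi_k(\lambda)=c^{(k)}_\alpha\lambda^{n_k-1+\alpha}+\dots+c^{(k)}_1\lambda^{n_k}+\sum_{i=1}^{n_k}a^{(k)}_i\lambda^{n_k-i}.$$ Taking $n$ copies with $(\lambda,\mu)$ replaced by $(\lambda_j,\mu_j)$, $j=1,\dots,n$, and solving (assumed possible on an open domain, with nondegenerate Jacobian with respect to the unknowns) for the $a^{(k)}_i$ gives functions $a^{(k)}_i=h^{(k)}_i(\boldsymbol\lambda,\boldsymbol\mu,\mathbf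 c)$, $i=1,\dots,n_k$, $k=1,\dots,m$. Here $\mathcal M\subset\mathbb{R}^{2n+N}$ is an open set with coordinates $(\boldsymbol\lambda,\boldsymbol\mu,\mathbf c)$, $\mathbf c=(c^{(1)}_1,\dots,c^{(1)}_\alpha,\dots,c^{(m)}_1,\dots,c^{(m)}_\alpha)$. The Poisson tensor $\pi_0=\sum_{i=1}^n\partial_{\lambda_i}\wedge\partial_{\mu_i}$ on $\mathcal M$ has rank $2n$, with the $c^{(k)}_j$ as Casimir functions, and $X^{(k)}_i:=\pi_0\,dh^{(k)}_i$. *)

theory Defs
  imports "HOL-Analysis.Analysis"
begin

text \<open>Smooth (C-infinity) functions of two real variables: continuous, with all
  first partial derivatives existing everywhere and again smooth (greatest fixed point).\<close>
coinductive smooth2 :: "(real \<times> real \<Rightarrow> real) \<Rightarrow> bool" where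
  "continuous_on UNIV f
   \<Longrightarrow> (\<forall>x y. ((\<lambda>t. f (t, y)) has_real_derivative d1 (x, y)) (at x))
   \<Longrightarrow> (\<forall>x y. ((\<lambda>t. f (x, t)) has_real_derivative d2 (x, y)) (at y))
   \<Longrightarrow> smooth2 d1 \<Longrightarrow> smooth2 d2 \<Longrightarrow> smooth2 f"

text \<open>Points of the phase space: (lambda_1..lambda_n, mu_1..mu_n, c^(k)_i), indices from 1.
  Coordinates outside the index ranges are irrelevant.\<close>
type_synonym pt = "(nat \<Rightarrow> real) \<times> (nat \<Rightarrow> real) \<times> (nat \<Rightarrow> nat \<Rightarrow> real)"

definition lam :: "pt \<Rightarrow> nat \<Rightarrow> real" where "lam p = fst p"
definition mu :: "pt \<Rightarrow> nat \<Rightarrow> real" where "mu p = fst (snd p)"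
definition cc :: "pt \<Rightarrow> nat \<Rightarrow> nat \<Rightarrow> real" where "cc p = snd (snd p)"

definition shift :: "pt \<Rightarrow> real \<Rightarrow> pt \<Rightarrow> pt" where
  "shift p t v = ((\<lambda>j. lam p j + t * lam v j), (\<lambda>j. mu p j + t * mu v j),
                  (\<lambda>k i. cc p k i + t * cc v k i))"

definition open_pts :: "nat \<Rightarrow> nat \<Rightarrow> (nat \<Rightarrow> nat) \<Rightarrow> nat \<Rightarrow> pt set \<Rightarrow> bool" where
  "open_pts n m nk \<alpha> M \<longleftrightarrow> (\<forall>p\<in>M. \<exists>e>0. \<forall>q.
     (\<forall>j\<in>{1..n}. \<bar>lam q j - lam p j\<bar> < e \<and> \<bar>mu q j - mu p j\<bar> < e) \<and>
     (\<forall>j. j \<notin> {1..n} \<longrightarrow> lam q j = lam p j \<and> mu q j = mu p j) \<and>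
     (\<forall>k\<in>{1..m}. \<forall>i\<in>{1..\<alpha>}. \<bar>cc q k i - cc p k i\<bar> < e) \<and>
     (\<forall>k i. \<not> (k \<in> {1..m} \<and> i \<in> {1..\<alpha>}) \<longrightarrow> cc q k i = cc p k i)
     \<longrightarrow> q \<in> M)"

definition psi :: "nat \<Rightarrow> nat \<Rightarrow> (nat \<Rightarrow> real) \<Rightarrow> (nat \<Rightarrow> real) \<Rightarrow> real \<Rightarrow> real" where
  "psi nk_k \<alpha> c a x = (\<Sum>r=1..\<alpha>. c r * x ^ (nk_k - 1 + r)) + (\<Sum>i=1..nk_k. a i * x ^ (nk_k - i))"

definition sep_rel :: "nat \<Rightarrow> nat \<Rightarrow> (nat \<Rightarrow> nat) \<Rightarrow> nat \<Rightarrow> (nat \<Rightarrow> real \<times> real \<Rightarrow> real)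
    \<Rightarrow> pt \<Rightarrow> (nat \<Rightarrow> nat \<Rightarrow> real) \<Rightarrow> bool" where
  "sep_rel n m nk \<alpha> \<phi> p a \<longleftrightarrow> (\<forall>j\<in>{1..n}.
     \<phi> 0 (lam p j, mu p j)
     + (\<Sum>k=1..m. \<phi> k (lam p j, mu p j) * psi (nk k) \<alpha> (cc p k) (a k) (lam p j)) = 0)"

definition supp_ok :: "nat \<Rightarrow> (nat \<Rightarrow> nat) \<Rightarrow> (nat \<Rightarrow> nat \<Rightarrow> real) \<Rightarrow> bool" where
  "supp_ok m nk a \<longleftrightarrow> (\<forall>k i. \<not> (k \<in> {1..m} \<and> i \<in> {1..nk k}) \<longrightarrow> a k i = 0)"

text \<open>Nondegeneracy of the Jacobian of the (linear in a) system with respect to the unknowns a.\<close>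
definition nondeg :: "nat \<Rightarrow> nat \<Rightarrow> (nat \<Rightarrow> nat) \<Rightarrow> (nat \<Rightarrow> real \<times> real \<Rightarrow> real) \<Rightarrow> pt \<Rightarrow> bool" where
  "nondeg n m nk \<phi> p \<longleftrightarrow> (\<forall>a. supp_ok m nk a \<longrightarrow>
     (\<forall>j\<in>{1..n}. (\<Sum>k=1..m. \<Sum>i=1..nk k. \<phi> k (lam p j, mu p j) * lam p j ^ (nk k - i) * a k i) = 0)
     \<longrightarrow> (\<forall>k i. a k i = 0))"

definition H :: "nat \<Rightarrow> nat \<Rightarrow> (nat \<Rightarrow> nat) \<Rightarrow> nat \<Rightarrow> (nat \<Rightarrow> real \<times> real \<Rightarrow> real)
    \<Rightarrow> pt \<Rightarrow> nat \<Rightarrow> nat \<Rightarrow> real" where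
  "H n m nk \<alpha> \<phi> p = (THE a. supp_ok m nk a \<and> sep_rel n m nk \<alpha> \<phi> p a)"

definition psibar :: "nat \<Rightarrow> nat \<Rightarrow> nat \<Rightarrow> (nat \<Rightarrow> real) \<Rightarrow> (nat \<Rightarrow> real) \<Rightarrow> real \<Rightarrow> real" where
  "psibar s nk_k \<alpha> c a x = (\<Sum>r=s+1..\<alpha>. c r * x ^ (nk_k + r - s - 1))
     + (\<Sum>i=1..nk_k. a i * x ^ (nk_k - i)) + (\<Sum>r=1..s. c r / x ^ (s + 1 - r))"

definition sep_rel_bar :: "nat \<Rightarrow> nat \<Rightarrow> nat \<Rightarrow> (nat \<Rightarrow> nat) \<Rightarrow> nat \<Rightarrow> (nat \<Rightarrow> real \<times> real \<Rightarrow> real)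
    \<Rightarrow> pt \<Rightarrow> (nat \<Rightarrow> nat \<Rightarrow> real) \<Rightarrow> bool" where
  "sep_rel_bar s n m nk \<alpha> \<phi> q a \<longleftrightarrow> (\<forall>j\<in>{1..n}.
     \<phi> 0 (lam q j, lam q j ^ s * mu q j) / lam q j ^ s
     + (\<Sum>k=1..m. \<phi> k (lam q j, mu q j * lam q j ^ s) * psibar s (nk k) \<alpha> (cc q k) (a k) (lam q j)) = 0)"

definition Hbar :: "nat \<Rightarrow> nat \<Rightarrow> nat \<Rightarrow> (nat \<Rightarrow> nat) \<Rightarrow> nat \<Rightarrow> (nat \<Rightarrow> real \<times> real \<Rightarrow> real)
    \<Rightarrow> pt \<Rightarrow> nat \<Rightarrow> nat \<Rightarrow> real" where
  "Hbar s n m nk \<alpha> \<phi> q = (THE a. supp_ok m nk a \<and> sep_rel_bar s n m nk \<alpha> \<phi> q a)"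

definition Miura :: "nat \<Rightarrow> nat \<Rightarrow> nat \<Rightarrow> (nat \<Rightarrow> nat) \<Rightarrow> nat \<Rightarrow> (nat \<Rightarrow> real \<times> real \<Rightarrow> real)
    \<Rightarrow> pt \<Rightarrow> pt" where
  "Miura s n m nk \<alpha> \<phi> p = (lam p, (\<lambda>j. mu p j / lam p j ^ s),
     (\<lambda>k i. if 1 \<le> i \<and> i \<le> s then H n m nk \<alpha> \<phi> p k (nk k - i + 1) else cc p k i))"

definition dlam :: "(pt \<Rightarrow> real) \<Rightarrow> pt \<Rightarrow> nat \<Rightarrow> real" where
  "dlam f p j = deriv (\<lambda>t. f ((lam p)(j := lam p j + t), mu p, cc p)) 0"
definition dmu :: "(pt \<Rightarrow> real) \<Rightarrow> pt \<Rightarrow> nat \<Rightarrow> real" where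
  "dmu f p j = deriv (\<lambda>t. f (lam p, (mu p)(j := mu p j + t), cc p)) 0"

text \<open>Hamiltonian vector field pi df for pi = sum_j d/dlambda_j wedge d/dmu_j, written as
  a tangent vector in the coordinates (lambda, mu, c); the c-components vanish.\<close>
definition ham_vf :: "(pt \<Rightarrow> real) \<Rightarrow> pt \<Rightarrow> pt" where
  "ham_vf f p = ((\<lambda>j. dmu f p j), (\<lambda>j. - dlam f p j), (\<lambda>k i. 0))"

end

theory Submission
  imports Defs "Jordan_Normal_Form.Determinant"
begin

(* The Hamiltonians h(p) = H p solve a linear system C(p) a = b(p) whose coefficients are smooth
   in p, so by Cramer's rule they are differentiable, and implicit differentiation shows that
   dh/dlambda_j and dh/dmu_j at p are multiples of the j-th column of C(p)^-1, with factors
   -R_lambda_j and -R_mu_j (the partial derivatives of the j-th separation relation).  Hence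
   X_h(h') = 0 for any two Hamiltonians, so the new Casimirs cbar = h are conserved along X.
   Under the Miura change of unknowns psi_k = lambda^s psibar_k, so the new relations at M(p)
   are the old ones divided by lambda_j^s and have the same coefficient matrix C(p).  The partial
   derivatives of hbar at M(p) are therefore multiples of the same columns, and the chain rule
   for mubar = mu / lambda^s turns X into Xbar. *)

section \<open>Square linear systems in the unknowns\<close>

definition unknowns :: "nat \<Rightarrow> (nat \<Rightarrow> nat) \<Rightarrow> (nat \<times> nat) set" where
  "unknowns m nk = Sigma {1..m} (\<lambda>k. {1..nk k})"

definition lin_form :: "nat \<Rightarrow> (nat \<Rightarrow> nat) \<Rightarrow> (nat \<Rightarrow> nat \<Rightarrow> real) \<Rightarrow> (nat \<Rightarrow> nat \<Rightarrow> real) \<Rightarrow> real" where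
  "lin_form m nk C a = (\<Sum>k=1..m. \<Sum>i=1..nk k. C k i * a k i)"

definition solves :: "nat \<Rightarrow> nat \<Rightarrow> (nat \<Rightarrow> nat) \<Rightarrow> (nat \<Rightarrow> nat \<Rightarrow> nat \<Rightarrow> real) \<Rightarrow> (nat \<Rightarrow> real)
    \<Rightarrow> (nat \<Rightarrow> nat \<Rightarrow> real) \<Rightarrow> bool" where
  "solves n m nk C b a \<longleftrightarrow> supp_ok m nk a \<and> (\<forall>j\<in>{1..n}. lin_form m nk (C j) a = b j)"

definition lin_inj :: "nat \<Rightarrow> nat \<Rightarrow> (nat \<Rightarrow> nat) \<Rightarrow> (nat \<Rightarrow> nat \<Rightarrow> nat \<Rightarrow> real) \<Rightarrow> bool" where
  "lin_inj n m nk C \<longleftrightarrow> (\<forall>a. solves n m nk C (\<lambda>_. 0) a \<longrightarrow> (\<forall>k i. a k i = 0))"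

definition lin_solve :: "nat \<Rightarrow> nat \<Rightarrow> (nat \<Rightarrow> nat) \<Rightarrow> (nat \<Rightarrow> nat \<Rightarrow> nat \<Rightarrow> real) \<Rightarrow> (nat \<Rightarrow> real)
    \<Rightarrow> nat \<Rightarrow> nat \<Rightarrow> real" where
  "lin_solve n m nk C b = (THE a. solves n m nk C b a)"

lemma finite_unknowns [simp]: "finite (unknowns m nk)"
  by (simp add: unknowns_def)

lemma mem_unknowns: "(k, i) \<in> unknowns m nk \<longleftrightarrow> k \<in> {1..m} \<and> i \<in> {1..nk k}"
  by (simp add: unknowns_def)

lemma card_unknowns: "card (unknowns m nk) = (\<Sum>k=1..m. nk k)"
  by (simp add: unknowns_def card_SigmaI)

lemma supp_ok_iff_unknowns: "supp_ok m nk a \<longleftrightarrow> (\<forall>k i. (k, i) \<notin> unknowns m nk \<longrightarrow> a k i = 0)"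
  unfolding supp_ok_def mem_unknowns by blast

lemma lin_form_unknowns: "lin_form m nk C a = (\<Sum>(k, i)\<in>unknowns m nk. C k i * a k i)"
  unfolding lin_form_def unknowns_def by (simp add: sum.Sigma)

lemma lin_form_scale: "lin_form m nk C (\<lambda>k i. u * a k i) = u * lin_form m nk C a"
  unfolding lin_form_def by (simp add: sum_distrib_left algebra_simps)

lemma lin_form_diff: "lin_form m nk C (\<lambda>k i. a k i - b k i) = lin_form m nk C a - lin_form m nk C b"
  unfolding lin_form_def by (simp add: right_diff_distrib sum_subtractf)

lemma lin_form_zero [simp]: "lin_form m nk C (\<lambda>_ _. 0) = 0"
  unfolding lin_form_def by simp

lemma lin_form_unit:
  assumes "(k, i) \<in> unknowns m nk"
  shows "lin_form m nk C (\<lambda>k' i'. of_bool ((k', i') = (k, i))) = C k i"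
proof -
  have "lin_form m nk C (\<lambda>k' i'. of_bool ((k', i') = (k, i)))
      = (\<Sum>x\<in>unknowns m nk. if x = (k, i) then C k i else 0)"
    unfolding lin_form_unknowns by (intro sum.cong) auto
  then show ?thesis using assms by simp
qed

lemma solves_unique:
  assumes "lin_inj n m nk C" "solves n m nk C b a" "solves n m nk C b a'"
  shows "a = a'"
proof -
  have "solves n m nk C (\<lambda>_. 0) (\<lambda>k i. a k i - a' k i)"
    using assms(2,3) unfolding solves_def supp_ok_def by (auto simp: lin_form_diff)
  then show ?thesis using assms(1) unfolding lin_inj_def by (auto intro!: ext)
qed

lemma lin_solve_eqI: "lin_inj n m nk C \<Longrightarrow> solves n m nk C b a \<Longrightarrow> lin_solve n m nk C b = a"
  unfolding lin_solve_def using solves_unique by blast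

lemma lin_solve_zero: "lin_inj n m nk C \<Longrightarrow> lin_solve n m nk C (\<lambda>_. 0) = (\<lambda>_ _. 0)"
  by (rule lin_solve_eqI) (auto simp: solves_def supp_ok_def)

lemma lin_solve_cong:
  "(\<And>j. j \<in> {1..n} \<Longrightarrow> C j = C' j \<and> b j = b' j) \<Longrightarrow> lin_solve n m nk C b = lin_solve n m nk C' b'"
  unfolding lin_solve_def solves_def by simp

lemma lin_inj_cong: "(\<And>j. j \<in> {1..n} \<Longrightarrow> C j = C' j) \<Longrightarrow> lin_inj n m nk C \<longleftrightarrow> lin_inj n m nk C'"
  unfolding lin_inj_def solves_def by simp

text \<open>Square systems are encoded as matrices through an enumeration \<open>e\<close> of the unknowns.\<close>

definition coeff_mat :: "nat \<Rightarrow> (nat \<Rightarrow> nat \<times> nat) \<Rightarrow> (nat \<Rightarrow> nat \<Rightarrow> nat \<Rightarrow> real) \<Rightarrow> real mat" where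
  "coeff_mat n e C = mat n n (\<lambda>(r, c). C (Suc r) (fst (e c)) (snd (e c)))"

definition vec_of :: "nat \<Rightarrow> (nat \<Rightarrow> nat \<times> nat) \<Rightarrow> (nat \<Rightarrow> nat \<Rightarrow> real) \<Rightarrow> real vec" where
  "vec_of n e a = vec n (\<lambda>c. a (fst (e c)) (snd (e c)))"

definition rhs_vec :: "nat \<Rightarrow> (nat \<Rightarrow> real) \<Rightarrow> real vec" where
  "rhs_vec n b = vec n (\<lambda>r. b (Suc r))"

definition unknowns_of_vec :: "nat \<Rightarrow> (nat \<Rightarrow> nat \<times> nat) \<Rightarrow> (nat \<times> nat) set \<Rightarrow> real vec
    \<Rightarrow> nat \<Rightarrow> nat \<Rightarrow> real" where
  "unknowns_of_vec n e S v k i = (if (k, i) \<in> S then v $ inv_into {0..<n} e (k, i) else 0)"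

lemma coeff_mat_carrier [simp]: "coeff_mat n e C \<in> carrier_mat n n"
  and dim_coeff_mat [simp]: "dim_row (coeff_mat n e C) = n" "dim_col (coeff_mat n e C) = n"
  by (simp_all add: coeff_mat_def)

lemma enumeration_exists: "\<exists>e. bij_betw e {0..<(\<Sum>k=1..m. nk k)} (unknowns m nk)"
  using ex_bij_betw_nat_finite[of "unknowns m nk"] by (simp add: card_unknowns)

context
  fixes n m :: nat and nk :: "nat \<Rightarrow> nat" and e :: "nat \<Rightarrow> nat \<times> nat"
  assumes e: "bij_betw e {0..<n} (unknowns m nk)"
begin

lemma enum_in_unknowns: "c < n \<Longrightarrow> e c \<in> unknowns m nk"
  using e by (auto simp: bij_betw_def)

lemma enum_inv:
  assumes "(k, i) \<in> unknowns m nk"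
  shows "inv_into {0..<n} e (k, i) < n" "e (inv_into {0..<n} e (k, i)) = (k, i)"
  using assms e inv_into_into[of "(k, i)" e "{0..<n}"] by (auto simp: bij_betw_def f_inv_into_f)

lemma coeff_mat_mult_vec_of:
  assumes "r < n"
  shows "(coeff_mat n e C *\<^sub>v vec_of n e a) $ r = lin_form m nk (C (Suc r)) a"
proof -
  have "(coeff_mat n e C *\<^sub>v vec_of n e a) $ r
      = (\<Sum>c\<in>{0..<n}. C (Suc r) (fst (e c)) (snd (e c)) * a (fst (e c)) (snd (e c)))"
    using assms by (simp add: coeff_mat_def vec_of_def scalar_prod_def)
  also have "\<dots> = (\<Sum>(k, i)\<in>unknowns m nk. C (Suc r) k i * a k i)"
    using sum.reindex_bij_betw[OF e, of "\<lambda>(k, i). C (Suc r) k i * a k i"] by (simp add: case_prod_beta)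
  finally show ?thesis by (simp add: lin_form_unknowns)
qed

lemma vec_of_unknowns_of_vec:
  assumes "v \<in> carrier_vec n"
  shows "vec_of n e (unknowns_of_vec n e (unknowns m nk) v) = v"
proof -
  have "e c \<in> unknowns m nk \<and> inv_into {0..<n} e (e c) = c" if "c < n" for c
    using e that by (auto simp: bij_betw_def inv_into_f_f)
  then show ?thesis using assms by (auto simp: vec_of_def unknowns_of_vec_def)
qed

lemma supp_ok_unknowns_of_vec: "supp_ok m nk (unknowns_of_vec n e (unknowns m nk) v)"
  by (auto simp: supp_ok_iff_unknowns unknowns_of_vec_def)

lemma unknowns_of_vec_vec_of:
  assumes "supp_ok m nk a"
  shows "unknowns_of_vec n e (unknowns m nk) (vec_of n e a) = a"
proof (intro ext)
  fix k i
  show "unknowns_of_vec n e (unknowns m nk) (vec_of n e a) k i = a k i"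
    using assms enum_inv[of k i] by (auto simp: unknowns_of_vec_def vec_of_def supp_ok_iff_unknowns)
qed

lemma solves_iff_mult_vec:
  assumes "supp_ok m nk a"
  shows "solves n m nk C b a \<longleftrightarrow> coeff_mat n e C *\<^sub>v vec_of n e a = rhs_vec n b"
proof -
  have "(\<forall>j\<in>{1..n}. lin_form m nk (C j) a = b j) \<longleftrightarrow> (\<forall>r<n. lin_form m nk (C (Suc r)) a = b (Suc r))"
    by (auto simp: Suc_le_eq) (metis Suc_pred le_simps(3))
  also have "\<dots> \<longleftrightarrow> (\<forall>r<n. (coeff_mat n e C *\<^sub>v vec_of n e a) $ r = rhs_vec n b $ r)"
    by (simp add: coeff_mat_mult_vec_of rhs_vec_def del: index_mult_mat_vec)
  also have "\<dots> \<longleftrightarrow> coeff_mat n e C *\<^sub>v vec_of n e a = rhs_vec n b"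
    by (auto simp: vec_eq_iff rhs_vec_def coeff_mat_def)
  finally show ?thesis using assms by (simp add: solves_def)
qed

lemma lin_inj_iff_det: "lin_inj n m nk C \<longleftrightarrow> det (coeff_mat n e C) \<noteq> 0"
proof -
  have "lin_inj n m nk C \<longleftrightarrow> (\<forall>a. supp_ok m nk a \<longrightarrow> coeff_mat n e C *\<^sub>v vec_of n e a = 0\<^sub>v n
      \<longrightarrow> vec_of n e a = 0\<^sub>v n)"
  proof -
    have "vec_of n e a = 0\<^sub>v n \<longleftrightarrow> (\<forall>k i. a k i = 0)" if "supp_ok m nk a" for a
    proof
      assume "vec_of n e a = 0\<^sub>v n"
      then have "a = unknowns_of_vec n e (unknowns m nk) (0\<^sub>v n)"
        using unknowns_of_vec_vec_of[OF that] by simp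
      then show "\<forall>k i. a k i = 0" using enum_inv by (auto simp: unknowns_of_vec_def)
    qed (auto simp: vec_of_def)
    moreover have "rhs_vec n (\<lambda>_. 0) = 0\<^sub>v n" by (auto simp: rhs_vec_def)
    ultimately show ?thesis
      unfolding lin_inj_def by (metis solves_def solves_iff_mult_vec)
  qed
  also have "\<dots> \<longleftrightarrow> (\<forall>v\<in>carrier_vec n. coeff_mat n e C *\<^sub>v v = 0\<^sub>v n \<longrightarrow> v = 0\<^sub>v n)"
    using vec_of_unknowns_of_vec supp_ok_unknowns_of_vec by (metis carrier_vec_dim_vec dim_vec vec_of_def)
  also have "\<dots> \<longleftrightarrow> det (coeff_mat n e C) \<noteq> 0"
    using det_0_iff_vec_prod_zero[OF coeff_mat_carrier] by blast
  finally show ?thesis .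
qed

lemma solves_exists:
  assumes "lin_inj n m nk C"
  shows "\<exists>a. solves n m nk C b a"
proof -
  from det_non_zero_imp_unit[OF coeff_mat_carrier assms[unfolded lin_inj_iff_det], unfolded Units_def ring_mat_def]
  obtain Q where Q: "Q \<in> carrier_mat n n" "coeff_mat n e C * Q = 1\<^sub>m n" by auto
  define v where "v = Q *\<^sub>v rhs_vec n b"
  have "v \<in> carrier_vec n" using Q by (simp add: v_def rhs_vec_def)
  moreover have "coeff_mat n e C *\<^sub>v v = rhs_vec n b"
    unfolding v_def using Q by (simp add: assoc_mult_mat_vec[symmetric, of _ n n _ n] rhs_vec_def)
  ultimately have "solves n m nk C b (unknowns_of_vec n e (unknowns m nk) v)"
    using solves_iff_mult_vec[OF supp_ok_unknowns_of_vec] vec_of_unknowns_of_vec by simp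
  then show ?thesis by blast
qed

end

context
  fixes n m :: nat and nk :: "nat \<Rightarrow> nat"
  assumes square: "(\<Sum>k=1..m. nk k) = n"
begin

lemma solves_lin_solve: "lin_inj n m nk C \<Longrightarrow> solves n m nk C b (lin_solve n m nk C b)"
  using enumeration_exists[where m=m and nk=nk] square solves_exists lin_solve_eqI by metis

lemma lin_solve_scale:
  assumes "lin_inj n m nk C"
  shows "lin_solve n m nk C (\<lambda>j. u * b j) k i = u * lin_solve n m nk C b k i"
proof -
  have "solves n m nk C (\<lambda>j. u * b j) (\<lambda>k i. u * lin_solve n m nk C b k i)"
    using solves_lin_solve[OF assms, of b] lin_form_scale[of m nk _ u]
    by (auto simp: solves_def supp_ok_def)
  then show ?thesis by (simp add: lin_solve_eqI[OF assms])
qed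

end

section \<open>Differentiating the solution of a parametric linear system\<close>

lemma ex_DERIV_det:
  assumes "\<And>t. M t \<in> carrier_mat n n"
    and "\<And>r c. r < n \<Longrightarrow> c < n \<Longrightarrow> ((\<lambda>t. M t $$ (r, c)) has_real_derivative M' r c) (at x)"
  shows "\<exists>D. ((\<lambda>t. det (M t)) has_real_derivative D) (at x)"
proof -
  have "((\<lambda>t. \<Sum>p\<in>{p. p permutes {0..<n}}. signof p * (\<Prod>i=0..<n. M t $$ (i, p i))) has_real_derivative
      (\<Sum>p\<in>{p. p permutes {0..<n}}. signof p *
        (\<Sum>i=0..<n. M' i (p i) * (\<Prod>j\<in>{0..<n}-{i}. M x $$ (j, p j))))) (at x)"
    by (intro DERIV_sum DERIV_cmult has_field_derivative_prod assms(2))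
      (auto dest: permutes_in_image[THEN iffD2])
  moreover have "(\<lambda>t. det (M t)) = (\<lambda>t. \<Sum>p\<in>{p. p permutes {0..<n}}. signof p * (\<Prod>i=0..<n. M t $$ (i, p i)))"
    using det_def'[OF assms(1)] by auto
  ultimately show ?thesis by auto
qed

lemma eventually_nonzero_nhds:
  fixes f :: "real \<Rightarrow> real"
  shows "isCont f x \<Longrightarrow> f x \<noteq> 0 \<Longrightarrow> eventually (\<lambda>t. f t \<noteq> 0) (nhds x)"
  unfolding eventually_nhds_conv_at isCont_def by (auto intro: tendsto_imp_eventually_ne)

lemma DERIV_eventually_const:
  "eventually (\<lambda>t. f t = c) (nhds x) \<Longrightarrow> (f has_real_derivative 0) (at x)"
  by (subst DERIV_cong_ev[OF refl _ refl, of _ "\<lambda>_. c"]) auto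

lemma lin_form_DERIV:
  assumes "\<And>k i. (k, i) \<in> unknowns m nk \<Longrightarrow> ((\<lambda>t. C t k i) has_real_derivative C' k i) (at x)"
    and "\<And>k i. ((\<lambda>t. a t k i) has_real_derivative a' k i) (at x)"
  shows "((\<lambda>t. lin_form m nk (C t) (a t)) has_real_derivative lin_form m nk C' (a x) + lin_form m nk (C x) a') (at x)"
proof -
  have "((\<lambda>t. \<Sum>(k, i)\<in>unknowns m nk. C t k i * a t k i) has_real_derivative
      (\<Sum>(k, i)\<in>unknowns m nk. C' k i * a x k i + a' k i * C x k i)) (at x)"
    unfolding case_prod_beta by (intro DERIV_sum DERIV_mult) (use assms in \<open>auto simp: case_prod_beta\<close>)
  then show ?thesis by (simp add: lin_form_unknowns sum.distrib case_prod_beta mult.commute)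
qed

context
  fixes n m :: nat and nk :: "nat \<Rightarrow> nat" and e :: "nat \<Rightarrow> nat \<times> nat"
    and C :: "real \<Rightarrow> nat \<Rightarrow> nat \<Rightarrow> nat \<Rightarrow> real" and C' :: "nat \<Rightarrow> nat \<Rightarrow> nat \<Rightarrow> real"
    and b :: "real \<Rightarrow> nat \<Rightarrow> real" and b' :: "nat \<Rightarrow> real"
  assumes e: "bij_betw e {0..<n} (unknowns m nk)"
    and dC: "\<And>j k i. j \<in> {1..n} \<Longrightarrow> (k, i) \<in> unknowns m nk \<Longrightarrow>
      ((\<lambda>t. C t j k i) has_real_derivative C' j k i) (at 0)"
    and db: "\<And>j. j \<in> {1..n} \<Longrightarrow> ((\<lambda>t. b t j) has_real_derivative b' j) (at 0)"
    and inj0: "lin_inj n m nk (C 0)"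
begin

private lemma coeff_mat_entry_DERIV:
  "r < n \<Longrightarrow> c < n \<Longrightarrow> ((\<lambda>t. coeff_mat n e (C t) $$ (r, c)) has_real_derivative C' (Suc r) (fst (e c)) (snd (e c))) (at 0)"
  using dC[of "Suc r" "fst (e c)" "snd (e c)"] enum_in_unknowns[OF e, of c] by (simp add: coeff_mat_def)

private lemma det_DERIV: "\<exists>D. ((\<lambda>t. det (coeff_mat n e (C t))) has_real_derivative D) (at 0)"
  by (rule ex_DERIV_det[OF coeff_mat_carrier coeff_mat_entry_DERIV])

lemma eventually_lin_inj: "eventually (\<lambda>t. lin_inj n m nk (C t)) (nhds 0)"
proof -
  have "isCont (\<lambda>t. det (coeff_mat n e (C t))) 0" using det_DERIV DERIV_isCont by blast
  moreover have "det (coeff_mat n e (C 0)) \<noteq> 0" using inj0 lin_inj_iff_det[OF e] by blast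
  ultimately show ?thesis
    by (rule eventually_nonzero_nhds[THEN eventually_mono]) (simp add: lin_inj_iff_det[OF e])
qed

text \<open>Differentiability of the solution comes from Cramer's rule.\<close>

lemma lin_solve_differentiable:
  assumes square: "(\<Sum>k=1..m. nk k) = n"
  shows "\<exists>x'. \<forall>k i. ((\<lambda>t. lin_solve n m nk (C t) (b t) k i) has_real_derivative x' k i) (at 0)"
proof -
  define A where "A t = coeff_mat n e (C t)" for t
  define x where "x t = lin_solve n m nk (C t) (b t)" for t
  have ev: "eventually (\<lambda>t. lin_inj n m nk (C t) \<and> solves n m nk (C t) (b t) (x t)) (nhds 0)"
    using eventually_lin_inj by (rule eventually_mono) (simp add: x_def solves_lin_solve[OF square])
  have cramer: "eventually (\<lambda>t. x t (fst (e c)) (snd (e c)) = det (replace_col (A t) (rhs_vec n (b t)) c) / det (A t))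
      (nhds 0)" if c: "c < n" for c
    using ev
  proof (rule eventually_mono)
    fix t assume t: "lin_inj n m nk (C t) \<and> solves n m nk (C t) (b t) (x t)"
    then have "det (A t) \<noteq> 0" "A t *\<^sub>v vec_of n e (x t) = rhs_vec n (b t)"
      using lin_inj_iff_det[OF e] solves_iff_mult_vec[OF e] by (auto simp: solves_def A_def)
    then show "x t (fst (e c)) (snd (e c)) = det (replace_col (A t) (rhs_vec n (b t)) c) / det (A t)"
      using cramer_lemma_mat[of "A t" n "vec_of n e (x t)" c] c by (simp add: vec_of_def A_def)
  qed
  have "\<exists>D. ((\<lambda>t. x t (fst (e c)) (snd (e c))) has_real_derivative D) (at 0)" if c: "c < n" for c
  proof -
    have "((\<lambda>t. replace_col (A t) (rhs_vec n (b t)) c $$ (r, c')) has_real_derivative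
        (if c' = c then b' (Suc r) else C' (Suc r) (fst (e c')) (snd (e c')))) (at 0)"
      if "r < n" "c' < n" for r c'
      using that coeff_mat_entry_DERIV db[of "Suc r"]
      by (auto simp: replace_col_def A_def rhs_vec_def)
    moreover have "replace_col (A t) (rhs_vec n (b t)) c \<in> carrier_mat n n" for t
      by (simp add: replace_col_def A_def)
    ultimately obtain D1 where D1: "((\<lambda>t. det (replace_col (A t) (rhs_vec n (b t)) c)) has_real_derivative D1) (at 0)"
      using ex_DERIV_det[of "\<lambda>t. replace_col (A t) (rhs_vec n (b t)) c" n
          "\<lambda>r c'. if c' = c then b' (Suc r) else C' (Suc r) (fst (e c')) (snd (e c'))" 0] by blast
    obtain D2 where D2: "((\<lambda>t. det (A t)) has_real_derivative D2) (at 0)" using det_DERIV by (auto simp: A_def)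
    have "det (A 0) \<noteq> 0" using inj0 lin_inj_iff_det[OF e] by (simp add: A_def)
    from DERIV_divide[OF D1 D2 this] show ?thesis
      using DERIV_cong_ev[OF refl cramer[OF c] refl] by blast
  qed
  then obtain xd where xd: "\<And>c. c < n \<Longrightarrow> ((\<lambda>t. x t (fst (e c)) (snd (e c))) has_real_derivative xd c) (at 0)"
    by metis
  have "\<exists>D. ((\<lambda>t. x t k i) has_real_derivative D) (at 0)" for k i
  proof (cases "(k, i) \<in> unknowns m nk")
    case True
    then show ?thesis using xd[of "inv_into {0..<n} e (k, i)"] enum_inv[OF e True] by auto
  next
    case False
    have "eventually (\<lambda>t. x t k i = 0) (nhds 0)"
      using ev by (rule eventually_mono) (use False in \<open>auto simp: solves_def supp_ok_iff_unknowns\<close>)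
    from DERIV_eventually_const[OF this] show ?thesis by blast
  qed
  then show ?thesis unfolding x_def by metis
qed

end

lemma lin_solve_has_derivative:
  assumes square: "(\<Sum>k=1..m. nk k) = n" and inj0: "lin_inj n m nk (C 0)"
    and res: "\<And>j a. j \<in> {1..n} \<Longrightarrow> \<exists>D. ((\<lambda>t. lin_form m nk (C t j) a - b t j) has_real_derivative D) (at 0)"
    and res0: "\<And>j. j \<in> {1..n} \<Longrightarrow>
      ((\<lambda>t. lin_form m nk (C t j) (lin_solve n m nk (C 0) (b 0)) - b t j) has_real_derivative E j) (at 0)"
  shows "((\<lambda>t. lin_solve n m nk (C t) (b t) k i) has_real_derivative lin_solve n m nk (C 0) (\<lambda>j. - E j) k i) (at 0)"
proof -
  define x where "x t = lin_solve n m nk (C t) (b t)" for t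
  have db: "\<exists>D. ((\<lambda>t. b t j) has_real_derivative D) (at 0)" if j: "j \<in> {1..n}" for j
  proof -
    obtain D where "((\<lambda>t. lin_form m nk (C t j) (\<lambda>_ _. 0) - b t j) has_real_derivative D) (at 0)"
      using res[OF j, of "\<lambda>_ _. 0"] by blast
    from DERIV_minus[OF this] show ?thesis by auto
  qed
  have dC: "\<exists>D. ((\<lambda>t. C t j k i) has_real_derivative D) (at 0)"
    if j: "j \<in> {1..n}" and ki: "(k, i) \<in> unknowns m nk" for j k i
  proof -
    obtain D where "((\<lambda>t. lin_form m nk (C t j) (\<lambda>k' i'. of_bool ((k', i') = (k, i))) - b t j)
        has_real_derivative D) (at 0)"
      using res[OF j, of "\<lambda>k' i'. of_bool ((k', i') = (k, i))"] by blast
    then have "((\<lambda>t. C t j k i - b t j) has_real_derivative D) (at 0)"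
      by (simp only: lin_form_unit[OF ki])
    moreover obtain D' where "((\<lambda>t. b t j) has_real_derivative D') (at 0)" using db[OF j] by blast
    ultimately have "((\<lambda>t. (C t j k i - b t j) + b t j) has_real_derivative D + D') (at 0)"
      by (rule DERIV_add)
    then show ?thesis by auto
  qed
  define C' where "C' j k i = (SOME D. ((\<lambda>t. C t j k i) has_real_derivative D) (at 0))" for j k i
  define b' where "b' j = (SOME D. ((\<lambda>t. b t j) has_real_derivative D) (at 0))" for j
  have C': "((\<lambda>t. C t j k i) has_real_derivative C' j k i) (at 0)"
    if "j \<in> {1..n}" "(k, i) \<in> unknowns m nk" for j k i
    unfolding C'_def by (rule someI_ex[OF dC[OF that]])
  have b': "((\<lambda>t. b t j) has_real_derivative b' j) (at 0)" if "j \<in> {1..n}" for j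
    unfolding b'_def by (rule someI_ex[OF db[OF that]])
  obtain e where e: "bij_betw e {0..<n} (unknowns m nk)"
    using enumeration_exists[where m = m and nk = nk] unfolding square by blast
  obtain x' where x': "\<And>k i. ((\<lambda>t. x t k i) has_real_derivative x' k i) (at 0)"
  proof -
    have "\<exists>x'. \<forall>k i. ((\<lambda>t. x t k i) has_real_derivative x' k i) (at 0)"
      unfolding x_def by (rule lin_solve_differentiable[where C = C and C' = C' and b = b and b' = b', OF e _ _ inj0 square]) (auto intro: C' b')
    then show thesis using that by blast
  qed
  have ev: "eventually (\<lambda>t. solves n m nk (C t) (b t) (x t)) (nhds 0)"
  proof -
    have "eventually (\<lambda>t. lin_inj n m nk (C t)) (nhds 0)"
      by (rule eventually_lin_inj[where C = C and C' = C' and b = b and b' = b', OF e _ _ inj0]) (auto intro: C' b')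
    then show ?thesis by (rule eventually_mono) (simp add: x_def solves_lin_solve[OF square])
  qed
  have "solves n m nk (C 0) (\<lambda>j. - E j) x'"
    unfolding solves_def supp_ok_iff_unknowns
  proof (intro conjI allI impI ballI)
    fix k i assume ki: "(k, i) \<notin> unknowns m nk"
    have "eventually (\<lambda>t. x t k i = 0) (nhds 0)"
      using ev by (rule eventually_mono) (use ki in \<open>simp add: solves_def supp_ok_iff_unknowns\<close>)
    then show "x' k i = 0" using DERIV_unique[OF x' DERIV_eventually_const] by blast
  next
    fix j assume j: "j \<in> {1..n}"
    text \<open>The residual at \<open>x t\<close> vanishes near 0; split it as the residual at \<open>x 0\<close> plus a
      term linear in \<open>x t - x 0\<close>.\<close>
    have "((\<lambda>t. lin_form m nk (C t j) (\<lambda>k i. x t k i - x 0 k i)) has_real_derivative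
        lin_form m nk (C' j) (\<lambda>k i. x 0 k i - x 0 k i) + lin_form m nk (C 0 j) x') (at 0)"
    proof (rule lin_form_DERIV)
      show "((\<lambda>t. x t k i - x 0 k i) has_real_derivative x' k i) (at 0)" for k i
        using DERIV_diff[OF x' DERIV_const[of "x 0 k i"]] by simp
    qed (rule C'[OF j])
    then have "((\<lambda>t. (lin_form m nk (C t j) (x 0) - b t j) + lin_form m nk (C t j) (\<lambda>k i. x t k i - x 0 k i))
        has_real_derivative E j + lin_form m nk (C 0 j) x') (at 0)"
      using DERIV_add[OF res0[OF j, folded x_def]] by simp
    moreover have "eventually (\<lambda>t. (lin_form m nk (C t j) (x 0) - b t j)
        + lin_form m nk (C t j) (\<lambda>k i. x t k i - x 0 k i) = 0) (nhds 0)"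
      using ev by (rule eventually_mono) (use j in \<open>simp add: solves_def lin_form_diff\<close>)
    ultimately have "E j + lin_form m nk (C 0 j) x' = 0"
      by (rule DERIV_unique[OF _ DERIV_eventually_const])
    then show "lin_form m nk (C 0 j) x' = - E j" by simp
  qed
  then show ?thesis using x' lin_solve_eqI[OF inj0] by (simp add: x_def)
qed

section \<open>Smooth functions of two variables\<close>

definition partial1 :: "(real \<times> real \<Rightarrow> real) \<Rightarrow> real \<times> real \<Rightarrow> real" where
  "partial1 f z = deriv (\<lambda>t. f (t, snd z)) (fst z)"

definition partial2 :: "(real \<times> real \<Rightarrow> real) \<Rightarrow> real \<times> real \<Rightarrow> real" where
  "partial2 f z = deriv (\<lambda>t. f (fst z, t)) (snd z)"

text \<open>Continuity of the second partial derivative makes a smooth function Frechet differentiable.\<close>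

lemma smooth2_has_derivative:
  assumes "smooth2 f"
  shows "(f has_derivative (\<lambda>h. partial1 f z * fst h + partial2 f z * snd h)) (at z)"
  using assms
proof cases
  case (1 d1 d2)
  obtain x y where z: "z = (x, y)" by (cases z)
  have p1: "partial1 f (x, y) = d1 (x, y)" and p2: "partial2 f (x, y) = d2 (x, y)"
    using 1(2,3) by (simp_all add: partial1_def partial2_def DERIV_imp_deriv)
  have fx: "((\<lambda>x. f (x, y)) has_derivative (\<lambda>h. h * d1 (x, y))) (at x within UNIV)"
    using 1(2) unfolding has_field_derivative_def by (simp add: mult.commute[of _ "d1 (x, y)"])
  have fy: "((\<lambda>y. f (x', y)) has_derivative blinfun_apply (blinfun_mult_right (d2 (x', y')))) (at y' within UNIV)"
    for x' y'
    using 1(3) by (simp add: has_field_derivative_def)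
  have "continuous_on UNIV d2" using 1(5) by cases
  then have "continuous (at (x, y)) (\<lambda>z. blinfun_mult_right (d2 z))"
    by (intro continuous_intros bounded_linear.continuous[OF bounded_linear_blinfun_mult_right])
      (simp add: continuous_on_eq_continuous_at)
  then have "continuous (at (x, y) within UNIV \<times> UNIV) (\<lambda>(x, y). blinfun_mult_right (d2 (x, y)))"
    by (simp add: case_prod_beta')
  from has_derivative_partialsI[where f = "\<lambda>x y. f (x, y)", OF fx fy this]
  have "((\<lambda>(x, y). f (x, y)) has_derivative (\<lambda>(tx, ty). tx * d1 (x, y) + d2 (x, y) * ty)) (at (x, y))"
    by simp
  then show ?thesis unfolding z p1 p2 by (simp add: case_prod_beta' mult.commute)
qed

lemma smooth2_DERIV_compose:
  assumes "smooth2 f" and x: "(x has_real_derivative x') (at t)" and y: "(y has_real_derivative y') (at t)"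
  shows "((\<lambda>t. f (x t, y t)) has_real_derivative
    partial1 f (x t, y t) * x' + partial2 f (x t, y t) * y') (at t)"
proof -
  have "((\<lambda>t. (x t, y t)) has_derivative (\<lambda>h. (h * x', h * y'))) (at t)"
    using has_derivative_Pair[OF x[unfolded has_field_derivative_def] y[unfolded has_field_derivative_def]]
    by (simp add: mult.commute)
  from has_derivative_compose[OF this smooth2_has_derivative[OF assms(1)]]
  have "((\<lambda>t. f (x t, y t)) has_derivative
      (\<lambda>h. partial1 f (x t, y t) * (h * x') + partial2 f (x t, y t) * (h * y'))) (at t)"
    by simp
  moreover have "(\<lambda>h. partial1 f (x t, y t) * (h * x') + partial2 f (x t, y t) * (h * y'))
      = (*) (partial1 f (x t, y t) * x' + partial2 f (x t, y t) * y')"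
    by (auto simp: algebra_simps)
  ultimately show ?thesis by (simp add: has_field_derivative_def)
qed

section \<open>The Miura change of unknowns\<close>

lemma psi_has_derivative: "((\<lambda>x. psi N \<alpha> c a x) has_real_derivative deriv (psi N \<alpha> c a) x) (at x)"
proof -
  have "((\<lambda>x. psi N \<alpha> c a x) has_real_derivative
      (\<Sum>r=1..\<alpha>. c r * (real (N - 1 + r) * x ^ (N - 1 + r - Suc 0)))
      + (\<Sum>i=1..N. a i * (real (N - i) * x ^ (N - i - Suc 0)))) (at x)"
    unfolding psi_def by (intro DERIV_add DERIV_sum DERIV_cmult DERIV_pow)
  then show ?thesis by (simp add: DERIV_imp_deriv)
qed

text \<open>The change of unknowns behind the Miura map: the top \<open>s\<close> Casimirs become the leading
  unknowns, and the last \<open>s\<close> unknowns become the coefficients of the negative powers.\<close>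

definition miura_rel :: "nat \<Rightarrow> nat \<Rightarrow> nat \<Rightarrow> (nat \<Rightarrow> real) \<Rightarrow> (nat \<Rightarrow> real) \<Rightarrow> (nat \<Rightarrow> real)
    \<Rightarrow> (nat \<Rightarrow> real) \<Rightarrow> bool" where
  "miura_rel s N \<alpha> c a cb ab \<longleftrightarrow>
     (\<forall>r\<in>{s+1..\<alpha>}. cb r = c r) \<and> (\<forall>r\<in>{1..s}. cb r = a (N - r + 1)) \<and>
     (\<forall>i\<in>{1..s}. ab i = c (s + 1 - i)) \<and> (\<forall>i\<in>{s+1..N}. ab i = a (i - s))"

lemma miura_rel_inverse:
  assumes "s \<le> N"
  shows "miura_rel s N \<alpha> (\<lambda>r. if r \<le> s then ab (s + 1 - r) else cb r)
    (\<lambda>i. if i \<le> N - s then ab (i + s) else cb (N - i + 1)) cb ab"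
  using assms by (auto simp: miura_rel_def)

lemma sum_split_nat_ivl:
  fixes f :: "nat \<Rightarrow> real"
  shows "s \<le> N \<Longrightarrow> (\<Sum>i=1..N. f i) = (\<Sum>i=1..s. f i) + (\<Sum>i=s+1..N. f i)"
  using sum.ub_add_nat[of 1 s f "N - s"] by simp

lemma psi_eq_power_mult_psibar:
  fixes x :: real
  assumes s: "s \<le> \<alpha>" "\<alpha> \<le> N" and x: "x \<noteq> 0" and rel: "miura_rel s N \<alpha> c a cb ab"
  shows "psi N \<alpha> c a x = x ^ s * psibar s N \<alpha> cb ab x"
proof -
  note rel = rel[unfolded miura_rel_def]
  have top: "x ^ s * (\<Sum>r=s+1..\<alpha>. cb r * x ^ (N + r - s - 1)) = (\<Sum>r=s+1..\<alpha>. c r * x ^ (N - 1 + r))"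
    unfolding sum_distrib_left
  proof (rule sum.cong[OF refl])
    fix r assume r: "r \<in> {s+1..\<alpha>}"
    have "x ^ s * x ^ (N + r - s - 1) = x ^ (N - 1 + r)" using r s by (simp add: power_add[symmetric])
    then show "x ^ s * (cb r * x ^ (N + r - s - 1)) = c r * x ^ (N - 1 + r)" using rel r by (simp add: algebra_simps)
  qed
  have mid: "x ^ s * (\<Sum>i=1..N. ab i * x ^ (N - i))
      = (\<Sum>r=1..s. c r * x ^ (N - 1 + r)) + (\<Sum>i=1..N-s. a i * x ^ (N - i))"
  proof -
    have "x ^ s * (\<Sum>i=1..N. ab i * x ^ (N - i)) = (\<Sum>i=1..N. ab i * x ^ (N - i + s))"
      unfolding sum_distrib_left
    proof (rule sum.cong[OF refl])
      fix i
      have "x ^ s * x ^ (N - i) = x ^ (N - i + s)" by (simp add: power_add)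
      then show "x ^ s * (ab i * x ^ (N - i)) = ab i * x ^ (N - i + s)" by (simp add: algebra_simps)
    qed
    also have "\<dots> = (\<Sum>i=1..s. ab i * x ^ (N - i + s)) + (\<Sum>i=s+1..N. ab i * x ^ (N - i + s))"
      using s by (intro sum_split_nat_ivl) simp
    also have "(\<Sum>i=1..s. ab i * x ^ (N - i + s)) = (\<Sum>r=1..s. c r * x ^ (N - 1 + r))"
      by (rule sum.reindex_bij_witness[of _ "\<lambda>r. s + 1 - r" "\<lambda>r. s + 1 - r"]) (use rel s in auto)
    also have "(\<Sum>i=s+1..N. ab i * x ^ (N - i + s)) = (\<Sum>i=1..N-s. a i * x ^ (N - i))"
      by (rule sum.reindex_bij_witness[of _ "\<lambda>i. i + s" "\<lambda>i. i - s"]) (use rel s in auto)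
    finally show ?thesis .
  qed
  have bottom: "x ^ s * (\<Sum>r=1..s. cb r / x ^ (s + 1 - r)) = (\<Sum>i=N-s+1..N. a i * x ^ (N - i))"
  proof -
    have "x ^ s * (\<Sum>r=1..s. cb r / x ^ (s + 1 - r)) = (\<Sum>r=1..s. cb r * x ^ (r - 1))"
      unfolding sum_distrib_left
    proof (rule sum.cong[OF refl])
      fix r assume r: "r \<in> {1..s}"
      have "x ^ s = x ^ (s + 1 - r) * x ^ (r - 1)" using r by (simp add: power_add[symmetric])
      then show "x ^ s * (cb r / x ^ (s + 1 - r)) = cb r * x ^ (r - 1)" using x by simp
    qed
    also have "\<dots> = (\<Sum>i=N-s+1..N. a i * x ^ (N - i))"
      by (rule sum.reindex_bij_witness[of _ "\<lambda>i. N + 1 - i" "\<lambda>r. N + 1 - r"])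
        (use rel s in \<open>auto simp: Suc_diff_le\<close>)
    finally show ?thesis .
  qed
  have "psi N \<alpha> c a x = (\<Sum>r=1..s. c r * x ^ (N - 1 + r)) + (\<Sum>r=s+1..\<alpha>. c r * x ^ (N - 1 + r))
      + ((\<Sum>i=1..N-s. a i * x ^ (N - i)) + (\<Sum>i=N-s+1..N. a i * x ^ (N - i)))"
    unfolding psi_def using sum_split_nat_ivl[of s \<alpha>] sum_split_nat_ivl[of "N - s" N] s by simp
  also have "\<dots> = x ^ s * psibar s N \<alpha> cb ab x"
    unfolding psibar_def distrib_left top mid bottom by simp
  finally show ?thesis .
qed

lemma shift_simps [simp]:
  "lam (shift p t v) = (\<lambda>j. lam p j + t * lam v j)"
  "mu (shift p t v) = (\<lambda>j. mu p j + t * mu v j)"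
  "cc (shift p t v) = (\<lambda>k i. cc p k i + t * cc v k i)"
  by (simp_all add: shift_def lam_def mu_def cc_def)

lemma pt_simps [simp]: "lam (x, y, z) = x" "mu (x, y, z) = y" "cc (x, y, z) = z"
  by (simp_all add: lam_def mu_def cc_def)

lemma shift_zero [simp]: "shift p 0 v = p"
  by (simp add: shift_def lam_def mu_def cc_def)

lemma ham_vf_simps [simp]:
  "lam (ham_vf f p) = dmu f p" "mu (ham_vf f p) = (\<lambda>j. - dlam f p j)" "cc (ham_vf f p) = (\<lambda>_ _. 0)"
  by (auto simp: ham_vf_def)

lemma dmu_eq_deriv_shift: "dmu f p j = deriv (\<lambda>t. f (shift p t (\<lambda>_. 0, \<lambda>l. of_bool (l = j), \<lambda>_ _. 0))) 0"
proof -
  have "(lam p, (mu p)(j := mu p j + t), cc p) = shift p t (\<lambda>_. 0, \<lambda>l. of_bool (l = j), \<lambda>_ _. 0)" for t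
    by (auto simp: shift_def)
  then show ?thesis by (simp add: dmu_def)
qed

lemma dlam_eq_deriv_shift: "dlam f p j = deriv (\<lambda>t. f (shift p t (\<lambda>l. of_bool (l = j), \<lambda>_. 0, \<lambda>_ _. 0))) 0"
proof -
  have "((lam p)(j := lam p j + t), mu p, cc p) = shift p t (\<lambda>l. of_bool (l = j), \<lambda>_. 0, \<lambda>_ _. 0)" for t
    by (auto simp: shift_def)
  then show ?thesis by (simp add: dlam_def)
qed

text \<open>The quotient-rule derivative of a new relation at a point where the old relation vanishes
  (hence the factor \<open>0\<close>).\<close>

lemma miura_quotient_identity:
  fixes x :: real
  assumes "x \<noteq> 0"
  shows "((L * dl + M * (dm * x ^ s + of_nat s * (dl * x ^ (s - 1)) * (\<mu> / x ^ s))) * x ^ s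
      - 0 * (of_nat s * (dl * x ^ (s - 1)))) / (x ^ s * x ^ s)
    = (L / x ^ s + M * of_nat s * \<mu> / x ^ Suc s) * dl + M * dm"
  using assms by (cases s) (simp_all add: field_simps)

section \<open>The old and the new separation relations\<close>

locale miura_setting =
  fixes n m \<alpha> s :: nat and nk :: "nat \<Rightarrow> nat" and \<phi> :: "nat \<Rightarrow> real \<times> real \<Rightarrow> real"
  assumes square: "(\<Sum>k=1..m. nk k) = n"
    and s_le_alpha: "s \<le> \<alpha>" and alpha_le: "\<forall>k\<in>{1..m}. \<alpha> \<le> nk k"
    and smooth: "\<forall>k\<in>{0..m}. smooth2 (\<phi> k)"
begin

abbreviation ham :: "pt \<Rightarrow> nat \<Rightarrow> nat \<Rightarrow> real" where "ham \<equiv> H n m nk \<alpha> \<phi>"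
abbreviation ham_bar :: "pt \<Rightarrow> nat \<Rightarrow> nat \<Rightarrow> real" where "ham_bar \<equiv> Hbar s n m nk \<alpha> \<phi>"
abbreviation miura :: "pt \<Rightarrow> pt" where "miura \<equiv> Miura s n m nk \<alpha> \<phi>"

definition coef :: "pt \<Rightarrow> nat \<Rightarrow> nat \<Rightarrow> nat \<Rightarrow> real" where
  "coef q l k i = \<phi> k (lam q l, mu q l) * lam q l ^ (nk k - i)"

definition rhs :: "pt \<Rightarrow> nat \<Rightarrow> real" where
  "rhs q l = - (\<phi> 0 (lam q l, mu q l)
     + (\<Sum>k=1..m. \<phi> k (lam q l, mu q l) * (\<Sum>r=1..\<alpha>. cc q k r * lam q l ^ (nk k - 1 + r))))"

definition residual :: "pt \<Rightarrow> nat \<Rightarrow> (nat \<Rightarrow> nat \<Rightarrow> real) \<Rightarrow> real" where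
  "residual q l a = \<phi> 0 (lam q l, mu q l)
     + (\<Sum>k=1..m. \<phi> k (lam q l, mu q l) * psi (nk k) \<alpha> (cc q k) (a k) (lam q l))"

definition residual_dlam :: "pt \<Rightarrow> nat \<Rightarrow> (nat \<Rightarrow> nat \<Rightarrow> real) \<Rightarrow> real" where
  "residual_dlam q l a = partial1 (\<phi> 0) (lam q l, mu q l)
     + (\<Sum>k=1..m. partial1 (\<phi> k) (lam q l, mu q l) * psi (nk k) \<alpha> (cc q k) (a k) (lam q l)
         + \<phi> k (lam q l, mu q l) * deriv (psi (nk k) \<alpha> (cc q k) (a k)) (lam q l))"

definition residual_dmu :: "pt \<Rightarrow> nat \<Rightarrow> (nat \<Rightarrow> nat \<Rightarrow> real) \<Rightarrow> real" where
  "residual_dmu q l a = partial2 (\<phi> 0) (lam q l, mu q l)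
     + (\<Sum>k=1..m. partial2 (\<phi> k) (lam q l, mu q l) * psi (nk k) \<alpha> (cc q k) (a k) (lam q l))"

definition coef_bar :: "pt \<Rightarrow> nat \<Rightarrow> nat \<Rightarrow> nat \<Rightarrow> real" where
  "coef_bar q l k i = \<phi> k (lam q l, mu q l * lam q l ^ s) * lam q l ^ (nk k - i)"

definition rhs_bar :: "pt \<Rightarrow> nat \<Rightarrow> real" where
  "rhs_bar q l = - (\<phi> 0 (lam q l, lam q l ^ s * mu q l) / lam q l ^ s
     + (\<Sum>k=1..m. \<phi> k (lam q l, mu q l * lam q l ^ s) *
         ((\<Sum>r=s+1..\<alpha>. cc q k r * lam q l ^ (nk k + r - s - 1)) + (\<Sum>r=1..s. cc q k r / lam q l ^ (s + 1 - r)))))"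

definition residual_bar :: "pt \<Rightarrow> nat \<Rightarrow> (nat \<Rightarrow> nat \<Rightarrow> real) \<Rightarrow> real" where
  "residual_bar q l a = \<phi> 0 (lam q l, lam q l ^ s * mu q l) / lam q l ^ s
     + (\<Sum>k=1..m. \<phi> k (lam q l, mu q l * lam q l ^ s) * psibar s (nk k) \<alpha> (cc q k) (a k) (lam q l))"

text \<open>Inverse of the Miura map on \<open>(\<lambda>, \<mu>)\<close>; the old Casimirs \<open>c\<close> are supplied separately.\<close>

definition unbar :: "pt \<Rightarrow> (nat \<Rightarrow> nat \<Rightarrow> real) \<Rightarrow> pt" where
  "unbar q c = (lam q, \<lambda>j. mu q j * lam q j ^ s, c)"

lemma unbar_simps [simp]: "lam (unbar q c) = lam q" "mu (unbar q c) j = mu q j * lam q j ^ s" "cc (unbar q c) = c"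
  by (simp_all add: unbar_def)

lemma residual_eq_lin_form: "residual q l a = lin_form m nk (coef q l) a - rhs q l"
  unfolding residual_def lin_form_def coef_def rhs_def psi_def
  by (simp add: distrib_left sum.distrib sum_distrib_left mult_ac)

lemma residual_bar_eq_lin_form: "residual_bar q l a = lin_form m nk (coef_bar q l) a - rhs_bar q l"
  unfolding residual_bar_def lin_form_def coef_bar_def rhs_bar_def psibar_def
  by (simp add: distrib_left sum.distrib sum_distrib_left mult_ac)

lemma ham_eq_lin_solve: "ham q = lin_solve n m nk (coef q) (rhs q)"
proof -
  have "supp_ok m nk a \<and> sep_rel n m nk \<alpha> \<phi> q a \<longleftrightarrow> solves n m nk (coef q) (rhs q) a" for a
    using residual_eq_lin_form[of q _ a] by (auto simp: solves_def sep_rel_def residual_def)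
  then show ?thesis by (simp add: H_def lin_solve_def)
qed

lemma ham_bar_eq_lin_solve: "ham_bar q = lin_solve n m nk (coef_bar q) (rhs_bar q)"
proof -
  have "supp_ok m nk a \<and> sep_rel_bar s n m nk \<alpha> \<phi> q a \<longleftrightarrow> solves n m nk (coef_bar q) (rhs_bar q) a" for a
    using residual_bar_eq_lin_form[of q _ a] by (auto simp: solves_def sep_rel_bar_def residual_bar_def)
  then show ?thesis by (simp add: Hbar_def lin_solve_def)
qed

lemma nondeg_iff_lin_inj: "nondeg n m nk \<phi> q \<longleftrightarrow> lin_inj n m nk (coef q)"
  unfolding nondeg_def lin_inj_def solves_def lin_form_def coef_def by auto

lemma residual_ham: "nondeg n m nk \<phi> p \<Longrightarrow> l \<in> {1..n} \<Longrightarrow> residual p l (ham p) = 0"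
  using solves_lin_solve[OF square, of "coef p" "rhs p"]
  by (simp add: nondeg_iff_lin_inj ham_eq_lin_solve residual_eq_lin_form solves_def)

lemma residual_cong:
  assumes "lam q l = lam q' l" "mu q l = mu q' l" "cc q = cc q'"
  shows "residual q l a = residual q' l a" "residual_dlam q l a = residual_dlam q' l a"
    "residual_dmu q l a = residual_dmu q' l a"
  using assms by (simp_all add: residual_def residual_dlam_def residual_dmu_def)

lemma residual_DERIV:
  assumes c: "\<And>t. cc (\<gamma> t) = c"
    and dl: "((\<lambda>t. lam (\<gamma> t) l) has_real_derivative dl) (at 0)"
    and dm: "((\<lambda>t. mu (\<gamma> t) l) has_real_derivative dm) (at 0)"
  shows "((\<lambda>t. residual (\<gamma> t) l a) has_real_derivative
    residual_dlam (\<gamma> 0) l a * dl + residual_dmu (\<gamma> 0) l a * dm) (at 0)"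
proof -
  define z where "z = (lam (\<gamma> 0) l, mu (\<gamma> 0) l)"
  define x where "x = lam (\<gamma> 0) l"
  have d\<phi>: "((\<lambda>t. \<phi> k (lam (\<gamma> t) l, mu (\<gamma> t) l)) has_real_derivative
      partial1 (\<phi> k) z * dl + partial2 (\<phi> k) z * dm) (at 0)" if "k \<in> {0..m}" for k
    unfolding z_def using smooth that by (intro smooth2_DERIV_compose dl dm) auto
  have d\<psi>: "((\<lambda>t. psi (nk k) \<alpha> (c k) (a k) (lam (\<gamma> t) l)) has_real_derivative
      deriv (psi (nk k) \<alpha> (c k) (a k)) x * dl) (at 0)" for k
    unfolding x_def by (rule DERIV_chain2[OF psi_has_derivative dl])
  have dk: "((\<lambda>t. \<phi> k (lam (\<gamma> t) l, mu (\<gamma> t) l) * psi (nk k) \<alpha> (c k) (a k) (lam (\<gamma> t) l))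
      has_real_derivative (partial1 (\<phi> k) z * dl + partial2 (\<phi> k) z * dm) * psi (nk k) \<alpha> (c k) (a k) x
          + deriv (psi (nk k) \<alpha> (c k) (a k)) x * dl * \<phi> k z) (at 0)" if "k \<in> {1..m}" for k
    using DERIV_mult[OF d\<phi>[of k] d\<psi>[of k]] that by (simp add: x_def z_def)
  have "((\<lambda>t. residual (\<gamma> t) l a) has_real_derivative
      partial1 (\<phi> 0) z * dl + partial2 (\<phi> 0) z * dm
      + (\<Sum>k=1..m. (partial1 (\<phi> k) z * dl + partial2 (\<phi> k) z * dm) * psi (nk k) \<alpha> (c k) (a k) x
          + deriv (psi (nk k) \<alpha> (c k) (a k)) x * dl * \<phi> k z)) (at 0)"
    unfolding residual_def c by (intro DERIV_add DERIV_sum dk d\<phi>) auto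
  moreover have "partial1 (\<phi> 0) z * dl + partial2 (\<phi> 0) z * dm
      + (\<Sum>k=1..m. (partial1 (\<phi> k) z * dl + partial2 (\<phi> k) z * dm) * psi (nk k) \<alpha> (c k) (a k) x
          + deriv (psi (nk k) \<alpha> (c k) (a k)) x * dl * \<phi> k z)
      = residual_dlam (\<gamma> 0) l a * dl + residual_dmu (\<gamma> 0) l a * dm"
    unfolding residual_dlam_def residual_dmu_def z_def x_def c
    by (simp add: algebra_simps sum.distrib sum_distrib_left sum_distrib_right)
  ultimately show ?thesis by simp
qed

lemma ham_has_derivative_along:
  assumes p: "nondeg n m nk \<phi> p" and v: "cc v = (\<lambda>_ _. 0)"
  shows "((\<lambda>t. ham (shift p t v) k i) has_real_derivative lin_solve n m nk (coef p)
    (\<lambda>l. - (residual_dlam p l (ham p) * lam v l + residual_dmu p l (ham p) * mu v l)) k i) (at 0)"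
proof -
  have line: "((\<lambda>t. residual (shift p t v) l a) has_real_derivative
      residual_dlam (shift p 0 v) l a * lam v l + residual_dmu (shift p 0 v) l a * mu v l) (at 0)" for l a
  proof (rule residual_DERIV)
    show "cc (shift p t v) = cc p" for t using v by simp
    show "((\<lambda>t. lam (shift p t v) l) has_real_derivative lam v l) (at 0)"
      by (auto intro!: derivative_eq_intros)
    show "((\<lambda>t. mu (shift p t v) l) has_real_derivative mu v l) (at 0)"
      by (auto intro!: derivative_eq_intros)
  qed
  have "((\<lambda>t. lin_solve n m nk (coef (shift p t v)) (rhs (shift p t v)) k i) has_real_derivative
      lin_solve n m nk (coef (shift p 0 v)) (\<lambda>l. - (residual_dlam p l (ham p) * lam v l
        + residual_dmu p l (ham p) * mu v l)) k i) (at 0)"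
    by (rule lin_solve_has_derivative[OF square])
      (use p line in \<open>auto simp: nondeg_iff_lin_inj residual_eq_lin_form[symmetric] ham_eq_lin_solve[symmetric]\<close>)
  then show ?thesis by (simp add: ham_eq_lin_solve)
qed

lemma Miura_simps [simp]:
  "lam (miura p) = lam p" "mu (miura p) j = mu p j / lam p j ^ s"
  "cc (miura p) k i = (if 1 \<le> i \<and> i \<le> s then ham p k (nk k - i + 1) else cc p k i)"
  by (simp_all add: Miura_def)

lemma residual_bar_eq_residual_unbar:
  assumes rel: "\<forall>k\<in>{1..m}. miura_rel s (nk k) \<alpha> (c k) (a k) (cc q k) (ab k)" and nz: "lam q l \<noteq> 0"
  shows "residual_bar q l ab = residual (unbar q c) l a / lam q l ^ s"
proof -
  define x where "x = lam q l"
  have \<psi>: "psi (nk k) \<alpha> (c k) (a k) x = x ^ s * psibar s (nk k) \<alpha> (cc q k) (ab k) x" if "k \<in> {1..m}" for k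
    using psi_eq_power_mult_psibar[OF s_le_alpha _ nz[folded x_def]] rel alpha_le that by auto
  have "residual (unbar q c) l a = \<phi> 0 (x, mu q l * x ^ s)
      + (\<Sum>k=1..m. \<phi> k (x, mu q l * x ^ s) * (x ^ s * psibar s (nk k) \<alpha> (cc q k) (ab k) x))"
    unfolding residual_def using \<psi> by (simp add: x_def)
  also have "\<dots> = x ^ s * residual_bar q l ab"
    unfolding residual_bar_def x_def[symmetric] using nz
    by (simp add: x_def[symmetric] distrib_left sum_distrib_left mult_ac)
  finally show ?thesis using nz by (simp add: x_def)
qed

definition miura_unknowns :: "pt \<Rightarrow> nat \<Rightarrow> nat \<Rightarrow> real" where
  "miura_unknowns p k i = (if (k, i) \<in> unknowns m nk
     then (if i \<le> s then cc p k (s + 1 - i) else ham p k (i - s)) else 0)"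

lemma miura_rel_Miura:
  "\<forall>k\<in>{1..m}. miura_rel s (nk k) \<alpha> (cc p k) (ham p k) (cc (miura p) k) (miura_unknowns p k)"
proof
  fix k assume "k \<in> {1..m}"
  then have "\<alpha> \<le> nk k" using alpha_le by blast
  then have "s \<le> nk k" using s_le_alpha by simp
  with \<open>k \<in> {1..m}\<close> show "miura_rel s (nk k) \<alpha> (cc p k) (ham p k) (cc (miura p) k) (miura_unknowns p k)"
    by (auto simp: miura_rel_def miura_unknowns_def mem_unknowns)
qed

lemma coef_bar_Miura: "lam p l \<noteq> 0 \<Longrightarrow> coef_bar (miura p) l = coef p l"
  by (intro ext) (simp add: coef_bar_def coef_def)

lemma residual_unbar_Miura:
  assumes "lam p l \<noteq> 0"
  shows "residual (unbar (miura p) (cc p)) l a = residual p l a"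
    "residual_dlam (unbar (miura p) (cc p)) l a = residual_dlam p l a"
    "residual_dmu (unbar (miura p) (cc p)) l a = residual_dmu p l a"
  using assms by (auto intro!: residual_cong)

lemma lin_inj_coef_bar_Miura:
  assumes "nondeg n m nk \<phi> p" "\<forall>j\<in>{1..n}. lam p j \<noteq> 0"
  shows "lin_inj n m nk (coef_bar (miura p))"
  using assms lin_inj_cong[of n "coef_bar (miura p)" "coef p"] coef_bar_Miura by (simp add: nondeg_iff_lin_inj)

lemma ham_bar_Miura:
  assumes p: "nondeg n m nk \<phi> p" and nz: "\<forall>j\<in>{1..n}. lam p j \<noteq> 0"
  shows "ham_bar (miura p) = miura_unknowns p"
proof -
  have "solves n m nk (coef_bar (miura p)) (rhs_bar (miura p)) (miura_unknowns p)"
    unfolding solves_def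
  proof (intro conjI ballI)
    show "supp_ok m nk (miura_unknowns p)" by (auto simp: supp_ok_iff_unknowns miura_unknowns_def)
    fix l assume l: "l \<in> {1..n}"
    have "residual_bar (miura p) l (miura_unknowns p) = residual (unbar (miura p) (cc p)) l (ham p) / lam p l ^ s"
      using residual_bar_eq_residual_unbar[OF miura_rel_Miura] nz l by simp
    also have "\<dots> = 0" using residual_unbar_Miura residual_ham[OF p l] nz l by simp
    finally show "lin_form m nk (coef_bar (miura p) l) (miura_unknowns p) = rhs_bar (miura p) l"
      by (simp add: residual_bar_eq_lin_form)
  qed
  then show ?thesis
    using lin_solve_eqI[OF lin_inj_coef_bar_Miura[OF p nz]] by (simp add: ham_bar_eq_lin_solve)
qed

lemma residual_bar_DERIV:
  assumes rel: "\<forall>k\<in>{1..m}. miura_rel s (nk k) \<alpha> (c k) (a k) (cc q k) (ab k)"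
    and nz: "lam q l \<noteq> 0" and v: "cc v = (\<lambda>_ _. 0)"
  shows "((\<lambda>t. residual_bar (shift q t v) l ab) has_real_derivative
    ((residual_dlam (unbar q c) l a * lam v l + residual_dmu (unbar q c) l a *
        (mu v l * lam q l ^ s + of_nat s * (lam v l * lam q l ^ (s - 1)) * mu q l)) * lam q l ^ s
      - residual (unbar q c) l a * (of_nat s * (lam v l * lam q l ^ (s - 1))))
    / (lam q l ^ s * lam q l ^ s)) (at 0)"
proof -
  define \<gamma> where "\<gamma> t = unbar (shift q t v) c" for t
  have dlam_l: "((\<lambda>t. lam (shift q t v) l) has_real_derivative lam v l) (at 0)"
    by (auto intro!: derivative_eq_intros)
  have dpow: "((\<lambda>t. lam (shift q t v) l ^ s) has_real_derivative of_nat s * (lam v l * lam q l ^ (s - 1))) (at 0)"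
    using DERIV_power[OF dlam_l, of s] by simp
  have dmu_l: "((\<lambda>t. mu (shift q t v) l) has_real_derivative mu v l) (at 0)"
    by (auto intro!: derivative_eq_intros)
  have "((\<lambda>t. mu (\<gamma> t) l) has_real_derivative
      mu v l * lam q l ^ s + of_nat s * (lam v l * lam q l ^ (s - 1)) * mu q l) (at 0)"
    unfolding \<gamma>_def unbar_simps using DERIV_mult[OF dmu_l dpow] by simp
  then have "((\<lambda>t. residual (\<gamma> t) l a) has_real_derivative
      residual_dlam (\<gamma> 0) l a * lam v l + residual_dmu (\<gamma> 0) l a *
        (mu v l * lam q l ^ s + of_nat s * (lam v l * lam q l ^ (s - 1)) * mu q l)) (at 0)"
    by (intro residual_DERIV[where c = c]) (use dlam_l in \<open>simp_all add: \<gamma>_def\<close>)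
  from DERIV_divide[OF this dpow]
  have dquot: "((\<lambda>t. residual (\<gamma> t) l a / lam (shift q t v) l ^ s) has_real_derivative
    ((residual_dlam (unbar q c) l a * lam v l + residual_dmu (unbar q c) l a *
        (mu v l * lam q l ^ s + of_nat s * (lam v l * lam q l ^ (s - 1)) * mu q l)) * lam q l ^ s
      - residual (unbar q c) l a * (of_nat s * (lam v l * lam q l ^ (s - 1))))
    / (lam q l ^ s * lam q l ^ s)) (at 0)"
    using nz by (simp add: \<gamma>_def)
  have "eventually (\<lambda>t. lam (shift q t v) l \<noteq> 0) (nhds 0)"
    by (rule eventually_nonzero_nhds[OF DERIV_isCont[OF dlam_l]]) (use nz in simp)
  then have "eventually (\<lambda>t. residual_bar (shift q t v) l ab = residual (\<gamma> t) l a / lam (shift q t v) l ^ s) (nhds 0)"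
  proof (rule eventually_mono)
    fix t assume nz_t: "lam (shift q t v) l \<noteq> 0"
    have "\<forall>k\<in>{1..m}. miura_rel s (nk k) \<alpha> (c k) (a k) (cc (shift q t v) k) (ab k)"
      using rel v by simp
    from this nz_t show "residual_bar (shift q t v) l ab = residual (\<gamma> t) l a / lam (shift q t v) l ^ s"
      unfolding \<gamma>_def by (rule residual_bar_eq_residual_unbar)
  qed
  from DERIV_cong_ev[OF refl this refl] dquot show ?thesis by blast
qed

section \<open>Partial derivatives of the Hamiltonians\<close>

lemma ham_bar_has_derivative_along:
  assumes p: "nondeg n m nk \<phi> p" and nz: "\<forall>j\<in>{1..n}. lam p j \<noteq> 0" and v: "cc v = (\<lambda>_ _. 0)"
  shows "((\<lambda>t. ham_bar (shift (miura p) t v) k i) has_real_derivative lin_solve n m nk (coef p)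
    (\<lambda>l. - ((residual_dlam p l (ham p) / lam p l ^ s
              + residual_dmu p l (ham p) * of_nat s * mu p l / lam p l ^ Suc s) * lam v l
            + residual_dmu p l (ham p) * mu v l)) k i) (at 0)"
proof -
  define q where "q = unbar (miura p) (cc p)"
  define E where "E l = ((residual_dlam q l (ham p) * lam v l + residual_dmu q l (ham p) *
        (mu v l * lam p l ^ s + of_nat s * (lam v l * lam p l ^ (s - 1)) * mu (miura p) l)) * lam p l ^ s
      - residual q l (ham p) * (of_nat s * (lam v l * lam p l ^ (s - 1)))) / (lam p l ^ s * lam p l ^ s)" for l
  have "((\<lambda>t. lin_solve n m nk (coef_bar (shift (miura p) t v)) (rhs_bar (shift (miura p) t v)) k i)
      has_real_derivative lin_solve n m nk (coef_bar (shift (miura p) 0 v)) (\<lambda>l. - E l) k i) (at 0)"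
  proof (rule lin_solve_has_derivative[OF square])
    show "lin_inj n m nk (coef_bar (shift (miura p) 0 v))" using lin_inj_coef_bar_Miura[OF p nz] by simp
  next
    fix l ab assume l: "l \<in> {1..n}"
    have nzl: "lam (miura p) l \<noteq> 0" using nz l by simp
    have "\<forall>k\<in>{1..m}. miura_rel s (nk k) \<alpha> (\<lambda>r. if r \<le> s then ab k (s + 1 - r) else cc (miura p) k r)
        (\<lambda>i. if i \<le> nk k - s then ab k (i + s) else cc (miura p) k (nk k - i + 1)) (cc (miura p) k) (ab k)"
      using s_le_alpha alpha_le by (auto intro!: miura_rel_inverse)
    from residual_bar_DERIV[OF this nzl v]
    show "\<exists>D. ((\<lambda>t. lin_form m nk (coef_bar (shift (miura p) t v) l) ab - rhs_bar (shift (miura p) t v) l)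
        has_real_derivative D) (at 0)"
      unfolding residual_bar_eq_lin_form[symmetric] by blast
  next
    fix l assume l: "l \<in> {1..n}"
    have nzl: "lam (miura p) l \<noteq> 0" using nz l by simp
    show "((\<lambda>t. lin_form m nk (coef_bar (shift (miura p) t v) l)
        (lin_solve n m nk (coef_bar (shift (miura p) 0 v)) (rhs_bar (shift (miura p) 0 v)))
        - rhs_bar (shift (miura p) t v) l) has_real_derivative E l) (at 0)"
      unfolding residual_bar_eq_lin_form[symmetric] shift_zero ham_bar_eq_lin_solve[symmetric]
        ham_bar_Miura[OF p nz] E_def q_def
      using residual_bar_DERIV[OF miura_rel_Miura nzl v] by simp
  qed
  moreover have "lin_solve n m nk (coef_bar (miura p)) (\<lambda>l. - E l) = lin_solve n m nk (coef p)
    (\<lambda>l. - ((residual_dlam p l (ham p) / lam p l ^ s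
              + residual_dmu p l (ham p) * of_nat s * mu p l / lam p l ^ Suc s) * lam v l
            + residual_dmu p l (ham p) * mu v l))"
  proof (rule lin_solve_cong)
    fix l assume l: "l \<in> {1..n}"
    have nzl: "lam p l \<noteq> 0" using nz l by simp
    have "residual q l (ham p) = 0" using residual_unbar_Miura residual_ham[OF p l] nzl by (simp add: q_def)
    moreover have "residual_dlam q l (ham p) = residual_dlam p l (ham p)"
      "residual_dmu q l (ham p) = residual_dmu p l (ham p)"
      using residual_unbar_Miura nzl by (simp_all add: q_def)
    ultimately have "E l = (residual_dlam p l (ham p) / lam p l ^ s
        + residual_dmu p l (ham p) * of_nat s * mu p l / lam p l ^ Suc s) * lam v l
        + residual_dmu p l (ham p) * mu v l"
      unfolding E_def Miura_simps(2) by (simp only: miura_quotient_identity[OF nzl])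
    then show "coef_bar (miura p) l = coef p l \<and> - E l = - ((residual_dlam p l (ham p) / lam p l ^ s
              + residual_dmu p l (ham p) * of_nat s * mu p l / lam p l ^ Suc s) * lam v l
            + residual_dmu p l (ham p) * mu v l)"
      using nzl by (simp add: coef_bar_Miura)
  qed
  ultimately show ?thesis by (simp add: ham_bar_eq_lin_solve)
qed

definition inv_col :: "pt \<Rightarrow> nat \<Rightarrow> nat \<Rightarrow> nat \<Rightarrow> real" where
  "inv_col p j = lin_solve n m nk (coef p) (\<lambda>l. of_bool (l = j))"

lemma lin_solve_unit_rhs:
  "nondeg n m nk \<phi> p \<Longrightarrow> lin_solve n m nk (coef p) (\<lambda>l. u * of_bool (l = j)) k i = u * inv_col p j k i"
  by (simp add: inv_col_def lin_solve_scale[OF square] nondeg_iff_lin_inj)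

lemma dmu_ham:
  assumes p: "nondeg n m nk \<phi> p"
  shows "dmu (\<lambda>q. ham q k i) p j = - residual_dmu p j (ham p) * inv_col p j k i"
proof -
  define v :: pt where "v = (\<lambda>_. 0, \<lambda>l. of_bool (l = j), \<lambda>_ _. 0)"
  have v: "cc v = (\<lambda>_ _. 0)" by (simp add: v_def)
  have rhs: "(\<lambda>l. - (residual_dlam p l (ham p) * lam v l + residual_dmu p l (ham p) * mu v l))
      = (\<lambda>l. (- residual_dmu p j (ham p)) * of_bool (l = j))"
    by (auto simp: v_def)
  have "((\<lambda>t. ham (shift p t v) k i) has_real_derivative - residual_dmu p j (ham p) * inv_col p j k i) (at 0)"
    using ham_has_derivative_along[OF p v, of k i] unfolding rhs lin_solve_unit_rhs[OF p] .
  then show ?thesis unfolding dmu_eq_deriv_shift v_def by (rule DERIV_imp_deriv)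
qed

lemma dlam_ham:
  assumes p: "nondeg n m nk \<phi> p"
  shows "dlam (\<lambda>q. ham q k i) p j = - residual_dlam p j (ham p) * inv_col p j k i"
proof -
  define v :: pt where "v = (\<lambda>l. of_bool (l = j), \<lambda>_. 0, \<lambda>_ _. 0)"
  have v: "cc v = (\<lambda>_ _. 0)" by (simp add: v_def)
  have rhs: "(\<lambda>l. - (residual_dlam p l (ham p) * lam v l + residual_dmu p l (ham p) * mu v l))
      = (\<lambda>l. (- residual_dlam p j (ham p)) * of_bool (l = j))"
    by (auto simp: v_def)
  have "((\<lambda>t. ham (shift p t v) k i) has_real_derivative - residual_dlam p j (ham p) * inv_col p j k i) (at 0)"
    using ham_has_derivative_along[OF p v, of k i] unfolding rhs lin_solve_unit_rhs[OF p] .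
  then show ?thesis unfolding dlam_eq_deriv_shift v_def by (rule DERIV_imp_deriv)
qed

lemma dmu_ham_bar:
  assumes p: "nondeg n m nk \<phi> p" and nz: "\<forall>j\<in>{1..n}. lam p j \<noteq> 0"
  shows "dmu (\<lambda>q. ham_bar q k i) (miura p) j = - residual_dmu p j (ham p) * inv_col p j k i"
proof -
  define v :: pt where "v = (\<lambda>_. 0, \<lambda>l. of_bool (l = j), \<lambda>_ _. 0)"
  have v: "cc v = (\<lambda>_ _. 0)" by (simp add: v_def)
  have rhs: "(\<lambda>l. - ((residual_dlam p l (ham p) / lam p l ^ s
              + residual_dmu p l (ham p) * of_nat s * mu p l / lam p l ^ Suc s) * lam v l
            + residual_dmu p l (ham p) * mu v l))
      = (\<lambda>l. (- residual_dmu p j (ham p)) * of_bool (l = j))"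
    by (auto simp: v_def)
  have "((\<lambda>t. ham_bar (shift (miura p) t v) k i) has_real_derivative
      - residual_dmu p j (ham p) * inv_col p j k i) (at 0)"
    using ham_bar_has_derivative_along[OF p nz v, of k i] unfolding rhs lin_solve_unit_rhs[OF p] .
  then show ?thesis unfolding dmu_eq_deriv_shift v_def by (rule DERIV_imp_deriv)
qed

lemma dlam_ham_bar:
  assumes p: "nondeg n m nk \<phi> p" and nz: "\<forall>j\<in>{1..n}. lam p j \<noteq> 0"
  shows "dlam (\<lambda>q. ham_bar q k i) (miura p) j = - (residual_dlam p j (ham p) / lam p j ^ s
      + residual_dmu p j (ham p) * of_nat s * mu p j / lam p j ^ Suc s) * inv_col p j k i"
proof -
  define v :: pt where "v = (\<lambda>l. of_bool (l = j), \<lambda>_. 0, \<lambda>_ _. 0)"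
  have v: "cc v = (\<lambda>_ _. 0)" by (simp add: v_def)
  have rhs: "(\<lambda>l. - ((residual_dlam p l (ham p) / lam p l ^ s
              + residual_dmu p l (ham p) * of_nat s * mu p l / lam p l ^ Suc s) * lam v l
            + residual_dmu p l (ham p) * mu v l))
      = (\<lambda>l. (- (residual_dlam p j (ham p) / lam p j ^ s
              + residual_dmu p j (ham p) * of_nat s * mu p j / lam p j ^ Suc s)) * of_bool (l = j))"
    by (auto simp: v_def)
  have "((\<lambda>t. ham_bar (shift (miura p) t v) k i) has_real_derivative
      - (residual_dlam p j (ham p) / lam p j ^ s
        + residual_dmu p j (ham p) * of_nat s * mu p j / lam p j ^ Suc s) * inv_col p j k i) (at 0)"
    using ham_bar_has_derivative_along[OF p nz v, of k i] unfolding rhs lin_solve_unit_rhs[OF p] .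
  then show ?thesis unfolding dlam_eq_deriv_shift v_def by (rule DERIV_imp_deriv)
qed

lemma ham_conserved_along_ham_vf:
  assumes p: "nondeg n m nk \<phi> p"
  shows "((\<lambda>t. ham (shift p t (ham_vf (\<lambda>q. ham q k0 i0) p)) k i) has_real_derivative 0) (at 0)"
proof -
  have "(\<lambda>l. - (residual_dlam p l (ham p) * dmu (\<lambda>q. ham q k0 i0) p l
        + residual_dmu p l (ham p) * - dlam (\<lambda>q. ham q k0 i0) p l)) = (\<lambda>_. 0)"
    by (simp add: dmu_ham[OF p] dlam_ham[OF p])
  then show ?thesis
    using ham_has_derivative_along[OF p, of "ham_vf (\<lambda>q. ham q k0 i0) p" k i] p
    by (simp add: lin_solve_zero nondeg_iff_lin_inj)
qed

lemma Miura_along_ham_vf_lam_mu: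
  fixes k i :: nat
  assumes p: "nondeg n m nk \<phi> p" and nz: "\<forall>j\<in>{1..n}. lam p j \<noteq> 0" and j: "j \<in> {1..n}"
  defines "v \<equiv> ham_vf (\<lambda>q. ham q k i) p" and "w \<equiv> ham_vf (\<lambda>q. ham_bar q k i) (miura p)"
  shows "((\<lambda>t. lam (miura (shift p t v)) j) has_real_derivative lam w j) (at 0)"
    and "((\<lambda>t. mu (miura (shift p t v)) j) has_real_derivative mu w j) (at 0)"
proof -
  define L M E where "L = residual_dlam p j (ham p)" and "M = residual_dmu p j (ham p)"
    and "E = inv_col p j k i"
  have v_simps: "lam v j = - M * E" "mu v j = L * E"
    by (simp_all add: v_def dmu_ham[OF p] dlam_ham[OF p] L_def M_def E_def)
  have w_simps: "lam w j = - M * E"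
    "mu w j = (L / lam p j ^ s + M * of_nat s * mu p j / lam p j ^ Suc s) * E"
    by (simp_all add: w_def dmu_ham_bar[OF p nz] dlam_ham_bar[OF p nz] L_def M_def E_def algebra_simps)
  have dlam_v: "((\<lambda>t. lam p j + t * lam v j) has_real_derivative lam v j) (at 0)"
    and dmu_v: "((\<lambda>t. mu p j + t * mu v j) has_real_derivative mu v j) (at 0)"
    by (auto intro!: derivative_eq_intros)
  then show "((\<lambda>t. lam (miura (shift p t v)) j) has_real_derivative lam w j) (at 0)"
    by (simp add: v_simps w_simps)
  have nzj: "lam p j \<noteq> 0" using nz j by blast
  from DERIV_divide[OF dmu_v DERIV_power[OF dlam_v]]
  have "((\<lambda>t. (mu p j + t * mu v j) / (lam p j + t * lam v j) ^ s) has_real_derivative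
      (mu v j * lam p j ^ s - mu p j * (of_nat s * (lam v j * lam p j ^ (s - 1)))) / (lam p j ^ s * lam p j ^ s))
      (at 0)"
    using nzj by simp
  moreover have "(mu v j * lam p j ^ s - mu p j * (of_nat s * (lam v j * lam p j ^ (s - 1))))
      / (lam p j ^ s * lam p j ^ s) = mu w j"
    unfolding v_simps w_simps using nzj by (cases s) (simp_all add: field_simps)
  ultimately show "((\<lambda>t. mu (miura (shift p t v)) j) has_real_derivative mu w j) (at 0)"
    by simp
qed

lemma Miura_along_ham_vf_cc:
  fixes k i :: nat
  assumes p: "nondeg n m nk \<phi> p"
  defines "v \<equiv> ham_vf (\<lambda>q. ham q k i) p" and "w \<equiv> ham_vf (\<lambda>q. ham_bar q k i) (miura p)"
  shows "((\<lambda>t. cc (miura (shift p t v)) k' r) has_real_derivative cc w k' r) (at 0)"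
proof (cases "1 \<le> r \<and> r \<le> s")
  case True
  then show ?thesis
    using ham_conserved_along_ham_vf[OF p, of k i k' "nk k' - r + 1"] by (simp add: v_def w_def)
next
  case False
  then have "cc (miura (shift p t v)) k' r = cc p k' r" for t by (auto simp: v_def)
  then show ?thesis by (simp add: w_def)
qed

end

theorem theorem12:
  fixes n m \<alpha> s :: nat and nk :: "nat \<Rightarrow> nat"
    and \<phi> :: "nat \<Rightarrow> real \<times> real \<Rightarrow> real" and \<M> :: "pt set"
  assumes "n \<ge> 1" and "m \<ge> 1"
    and "\<forall>k\<in>{1..m}. nk k \<ge> 1"
    and "(\<Sum>k=1..m. nk k) = n"
    and "1 \<le> \<alpha>" and "\<forall>k\<in>{1..m}. \<alpha> \<le> nk k"
    and "\<forall>k\<in>{0..m}. smooth2 (\<phi> k)"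
    and "\<phi> m = (\<lambda>_. 1)"
    and "open_pts n m nk \<alpha> \<M>"
    and "\<forall>p\<in>\<M>. nondeg n m nk \<phi> p"
    and "\<forall>p\<in>\<M>. \<exists>a. supp_ok m nk a \<and> sep_rel n m nk \<alpha> \<phi> p a"
    and "s \<in> {1..\<alpha>}"
    and "\<forall>p\<in>\<M>. \<forall>j\<in>{1..n}. lam p j \<noteq> 0"
    and "inj_on (Miura s n m nk \<alpha> \<phi>) \<M>"
  shows "\<forall>p\<in>\<M>. \<forall>k\<in>{1..m}. \<forall>i\<in>{1..nk k}.
    (let v = ham_vf (\<lambda>q. H n m nk \<alpha> \<phi> q k i) p;
         w = ham_vf (\<lambda>q. Hbar s n m nk \<alpha> \<phi> q k i) (Miura s n m nk \<alpha> \<phi> p);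
         F = (\<lambda>t. Miura s n m nk \<alpha> \<phi> (shift p t v))
     in (\<forall>j\<in>{1..n}. ((\<lambda>t. lam (F t) j) has_real_derivative lam w j) (at 0)
                  \<and> ((\<lambda>t. mu (F t) j) has_real_derivative mu w j) (at 0))
      \<and> (\<forall>k'\<in>{1..m}. \<forall>r\<in>{1..\<alpha>}. ((\<lambda>t. cc (F t) k' r) has_real_derivative cc w k' r) (at 0)))"
proof -
  interpret miura_setting n m \<alpha> s nk \<phi>
    using assms(4,6,7,12) by unfold_locales auto
  have "nondeg n m nk \<phi> p" and "\<forall>j\<in>{1..n}. lam p j \<noteq> 0" if "p \<in> \<M>" for p
    using assms(10,13) that by auto
  then show ?thesis
    unfolding Let_def using Miura_along_ham_vf_lam_mu Miura_along_ham_vf_cc by blast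
qed

end
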